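(* For every finite preordered set $C$ and every prime power $q$, $\rho_C(q)=\rho_{C^*}(q)$. In particular, for every tuple $(l_1,\dots,l_s)$ of nonnegative integers, $\rho_{(l_1,\dots,l_s)}(q)=\rho_{(l_s,\dots,l_1)}(q)$.
   Context: A preorder on a finite set $C$ is a reflexive transitive relation $\preccurlyeq$. Its dual $C^*$ is $C$ with $x\preccurlyeq' y$ iff $y\preccurlyeq x$. $M^C(q)$ is the ring of $C\times C$ matrices $(x_{ij})$ over $\mathbb{F}_q$ with $x_{ij}=0$ unless $i\preccurlyeq j$; $P^C(q)$ is its group of invertible elements and $N^C(q)$ its set of nilpotent elements; $\rho_C(q)$ is the number of orbits of $P^C(q)$ on $N^C(q)$ under conjugation. For a tuple $\mathbf l=(l_1,\dots,l_s)$, $\rho_{\mathbf l}(q)=\rho_C(q)$ for $C$ a disjoint union of blocks $B_1,\dots,B_s$ with $|B_i|=l_i$ and $x\preccurlyeq y$ iff $x\in B_i,y\in B_j$ with $i\le j$; equivalently, $\rho_{\mathbf l}(q)$ is the number of conjugacy orbits of invertible block upper triangular matrices with diagonal blocks of sizes $l_1,\dots,l_s$ on the nilpotent such matrices. *)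

theory Defs
  imports Main
begin

definition incidence_mats :: "'c set \<Rightarrow> ('c \<Rightarrow> 'c \<Rightarrow> bool) \<Rightarrow> ('c \<Rightarrow> 'c \<Rightarrow> 'a::field) set" where
  "incidence_mats C le = {X. \<forall>i j. X i j \<noteq> 0 \<longrightarrow> i \<in> C \<and> j \<in> C \<and> le i j}"

definition mmul :: "'c set \<Rightarrow> ('c \<Rightarrow> 'c \<Rightarrow> 'a::field) \<Rightarrow> ('c \<Rightarrow> 'c \<Rightarrow> 'a) \<Rightarrow> ('c \<Rightarrow> 'c \<Rightarrow> 'a)" where
  "mmul C X Y = (\<lambda>i j. \<Sum>k\<in>C. X i k * Y k j)"

definition mone :: "'c set \<Rightarrow> ('c \<Rightarrow> 'c \<Rightarrow> 'a::field)" where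
  "mone C = (\<lambda>i j. if i \<in> C \<and> i = j then 1 else 0)"

fun mpow :: "'c set \<Rightarrow> ('c \<Rightarrow> 'c \<Rightarrow> 'a::field) \<Rightarrow> nat \<Rightarrow> ('c \<Rightarrow> 'c \<Rightarrow> 'a)" where
  "mpow C X 0 = mone C"
| "mpow C X (Suc n) = mmul C X (mpow C X n)"

definition units_M :: "'c set \<Rightarrow> ('c \<Rightarrow> 'c \<Rightarrow> bool) \<Rightarrow> ('c \<Rightarrow> 'c \<Rightarrow> 'a::field) set" where
  "units_M C le = {X \<in> incidence_mats C le. \<exists>Y \<in> incidence_mats C le.
      mmul C X Y = mone C \<and> mmul C Y X = mone C}"

definition nilp_M :: "'c set \<Rightarrow> ('c \<Rightarrow> 'c \<Rightarrow> bool) \<Rightarrow> ('c \<Rightarrow> 'c \<Rightarrow> 'a::field) set" where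
  "nilp_M C le = {X \<in> incidence_mats C le. \<exists>n. mpow C X n = (\<lambda>i j. 0)}"

definition conj_orbit :: "'c set \<Rightarrow> ('c \<Rightarrow> 'c \<Rightarrow> bool) \<Rightarrow> ('c \<Rightarrow> 'c \<Rightarrow> 'a::field) \<Rightarrow> ('c \<Rightarrow> 'c \<Rightarrow> 'a) set" where
  "conj_orbit C le X = {Y. \<exists>g \<in> units_M C le. \<exists>h \<in> incidence_mats C le.
      mmul C g h = mone C \<and> mmul C h g = mone C \<and> Y = mmul C (mmul C g X) h}"

text \<open>rho_C(q) for the field 'a with q elements: number of P^C-orbits on N^C.\<close>
definition rho :: "'a::{field,finite} itself \<Rightarrow> 'c set \<Rightarrow> ('c \<Rightarrow> 'c \<Rightarrow> bool) \<Rightarrow> nat" where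
  "rho _ C le = card ((conj_orbit C le :: ('c \<Rightarrow> 'c \<Rightarrow> 'a) \<Rightarrow> _) ` nilp_M C le)"

text \<open>Block preorder for a tuple l = (l_1,...,l_s): elements (i,a) with i < s, a < l_i;
  (i,a) \<preccurlyeq> (j,b) iff i \<le> j.\<close>
definition block_set :: "nat list \<Rightarrow> (nat \<times> nat) set" where
  "block_set ls = {(i, a). i < length ls \<and> a < ls ! i}"

definition block_le :: "nat \<times> nat \<Rightarrow> nat \<times> nat \<Rightarrow> bool" where
  "block_le x y = (fst x \<le> fst y)"

definition rho_tuple :: "'a::{field,finite} itself \<Rightarrow> nat list \<Rightarrow> nat" where
  "rho_tuple T ls = rho T (block_set ls) block_le"

end

theory Submission
  imports Defs
begin

(* Transposition X \<mapsto> X^T reverses products and sends matrices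
   supported on a preorder to matrices supported on its dual, so it is an
   anti-isomorphism of incidence algebras M^C \<rightarrow> M^{C*}.  Such an anti-isomorphism
   maps nilpotents to nilpotents, units to units and conjugacy orbits to conjugacy
   orbits (g X g^-1 goes to (g^-1)^T X^T g^T), hence it induces a bijection between
   the orbit sets and rho_C = rho_{C*}.

   We work slightly more generally with "relabel by an involution \<sigma>, then transpose",
   X \<mapsto> (\<lambda>x y. X (\<sigma> y) (\<sigma> x)).  For \<sigma> = id this is the duality statement.  For the
   block preorder, \<sigma> reverses the order of the blocks; relabelling turns the blocks
   of rev l into those of l with the order reversed, and transposition reverses it
   back, so rho_(l_1..l_s) = rho_(l_s..l_1) follows directly. *)

lemma mmul_assoc: "mmul C (mmul C X Y) Z = mmul C X (mmul C Y Z)"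
proof (intro ext)
  fix i j
  have "mmul C (mmul C X Y) Z i j = (\<Sum>k\<in>C. \<Sum>l\<in>C. X i l * Y l k * Z k j)"
    by (simp add: mmul_def sum_distrib_right)
  also have "\<dots> = (\<Sum>l\<in>C. \<Sum>k\<in>C. X i l * Y l k * Z k j)"
    by (rule sum.swap)
  also have "\<dots> = mmul C X (mmul C Y Z) i j"
    by (simp add: mmul_def sum_distrib_left mult.assoc)
  finally show "mmul C (mmul C X Y) Z i j = mmul C X (mmul C Y Z) i j" .
qed

text \<open>Matrices of an incidence algebra vanish outside C \<times> C, so the identity acts
  trivially on them (the sums run over C, which must be finite).\<close>

lemma mmul_mone_right:
  assumes "finite C" and "X \<in> incidence_mats C le"
  shows "mmul C X (mone C) = X"
proof (intro ext)
  fix i j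
  have "mmul C X (mone C) i j = (\<Sum>k\<in>C. if k = j then X i k else 0)"
    unfolding mmul_def mone_def by (rule sum.cong) auto
  also have "\<dots> = X i j"
    using assms by (auto simp: incidence_mats_def)
  finally show "mmul C X (mone C) i j = X i j" .
qed

lemma mmul_mone_left:
  assumes "finite C" and "X \<in> incidence_mats C le"
  shows "mmul C (mone C) X = X"
proof (intro ext)
  fix i j
  have "mmul C (mone C) X i j = (\<Sum>k\<in>C. if i = k then X k j else 0)"
    unfolding mmul_def mone_def by (rule sum.cong) auto
  also have "\<dots> = X i j"
    using assms by (auto simp: incidence_mats_def)
  finally show "mmul C (mone C) X i j = X i j" .
qed

text \<open>Powers can also be unfolded on the right; needed because anti-homomorphisms
  reverse the order of factors.\<close>

lemma mpow_Suc_right: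
  assumes "finite C" and "X \<in> incidence_mats C le"
  shows "mpow C X (Suc n) = mmul C (mpow C X n) X"
proof (induction n)
  case 0
  show ?case using assms by (simp add: mmul_mone_left mmul_mone_right)
next
  case (Suc n)
  have "mpow C X (Suc (Suc n)) = mmul C X (mmul C (mpow C X n) X)"
    using Suc by simp
  also have "\<dots> = mmul C (mpow C X (Suc n)) X"
    by (simp add: mmul_assoc)
  finally show ?case .
qed

locale incidence_antihom =
  fixes C1 :: "'c set" and le1 :: "'c \<Rightarrow> 'c \<Rightarrow> bool"
    and C2 :: "'c set" and le2 :: "'c \<Rightarrow> 'c \<Rightarrow> bool"
    and \<Phi> :: "('c \<Rightarrow> 'c \<Rightarrow> 'a::field) \<Rightarrow> ('c \<Rightarrow> 'c \<Rightarrow> 'a)"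
  assumes finite_target: "finite C2"
    and maps_into: "X \<in> incidence_mats C1 le1 \<Longrightarrow> \<Phi> X \<in> incidence_mats C2 le2"
    and maps_one: "\<Phi> (mone C1) = mone C2"
    and maps_zero: "\<Phi> (\<lambda>i j. 0) = (\<lambda>i j. 0)"
    and reverses_mult: "\<Phi> (mmul C1 X Y) = mmul C2 (\<Phi> Y) (\<Phi> X)"
begin

lemma maps_mpow:
  assumes "X \<in> incidence_mats C1 le1"
  shows "\<Phi> (mpow C1 X n) = mpow C2 (\<Phi> X) n"
proof (induction n)
  case 0
  show ?case by (simp add: maps_one)
next
  case (Suc n)
  then show ?case
    using mpow_Suc_right[OF finite_target maps_into[OF assms]] by (simp add: reverses_mult)
qed

lemma maps_nilp: "X \<in> nilp_M C1 le1 \<Longrightarrow> \<Phi> X \<in> nilp_M C2 le2"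
proof -
  assume "X \<in> nilp_M C1 le1"
  then obtain n where X: "X \<in> incidence_mats C1 le1" and n: "mpow C1 X n = (\<lambda>i j. 0)"
    unfolding nilp_M_def by blast
  have "mpow C2 (\<Phi> X) n = (\<lambda>i j. 0)"
    using maps_mpow[OF X, of n] n maps_zero by simp
  then show ?thesis
    unfolding nilp_M_def using maps_into[OF X] by blast
qed

text \<open>The conjugate g X h (h = g^-1) is sent to \<Phi>(h) \<Phi>(X) \<Phi>(g), and \<Phi>(h) is a unit
  with inverse \<Phi>(g).\<close>

lemma maps_orbit: "\<Phi> ` conj_orbit C1 le1 X \<subseteq> conj_orbit C2 le2 (\<Phi> X)"
proof
  fix Z assume "Z \<in> \<Phi> ` conj_orbit C1 le1 X"
  then obtain g h where g: "g \<in> units_M C1 le1" and h: "h \<in> incidence_mats C1 le1"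
    and gh: "mmul C1 g h = mone C1" and hg: "mmul C1 h g = mone C1"
    and Z: "Z = \<Phi> (mmul C1 (mmul C1 g X) h)"
    unfolding conj_orbit_def by blast
  have \<Phi>g: "\<Phi> g \<in> incidence_mats C2 le2"
    using g maps_into unfolding units_M_def by blast
  have \<Phi>h: "\<Phi> h \<in> incidence_mats C2 le2"
    using h maps_into by blast
  have inverse: "mmul C2 (\<Phi> h) (\<Phi> g) = mone C2" "mmul C2 (\<Phi> g) (\<Phi> h) = mone C2"
    using gh hg by (simp_all add: reverses_mult[symmetric] maps_one)
  have unit: "\<Phi> h \<in> units_M C2 le2"
    unfolding units_M_def using \<Phi>g \<Phi>h inverse by blast
  have "Z = mmul C2 (mmul C2 (\<Phi> h) (\<Phi> X)) (\<Phi> g)"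
    using Z by (simp add: reverses_mult mmul_assoc)
  then show "Z \<in> conj_orbit C2 le2 (\<Phi> X)"
    unfolding conj_orbit_def using unit \<Phi>g inverse by blast
qed

end

text \<open>Mutually inverse anti-homomorphisms identify nilpotents and orbits, hence the
  orbit sets have the same cardinality.\<close>

lemma rho_eq_antiiso:
  fixes \<Phi> \<Psi> :: "('c \<Rightarrow> 'c \<Rightarrow> 'a::{field,finite}) \<Rightarrow> ('c \<Rightarrow> 'c \<Rightarrow> 'a)"
  assumes \<Phi>: "incidence_antihom C1 le1 C2 le2 \<Phi>"
    and \<Psi>: "incidence_antihom C2 le2 C1 le1 \<Psi>"
    and \<Psi>\<Phi>: "\<And>X. \<Psi> (\<Phi> X) = X" and \<Phi>\<Psi>: "\<And>Y. \<Phi> (\<Psi> Y) = Y"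
  shows "rho TYPE('a) C1 le1 = rho TYPE('a) C2 le2"
proof -
  interpret \<Phi>: incidence_antihom C1 le1 C2 le2 \<Phi> by (rule \<Phi>)
  interpret \<Psi>: incidence_antihom C2 le2 C1 le1 \<Psi> by (rule \<Psi>)
  have inj: "inj \<Phi>"
    by (metis injI \<Psi>\<Phi>)
  have nilp: "\<Phi> ` nilp_M C1 le1 = nilp_M C2 le2"
  proof
    show "\<Phi> ` nilp_M C1 le1 \<subseteq> nilp_M C2 le2"
      using \<Phi>.maps_nilp by blast
    show "nilp_M C2 le2 \<subseteq> \<Phi> ` nilp_M C1 le1"
      using \<Psi>.maps_nilp \<Phi>\<Psi> by (metis image_eqI subsetI)
  qed
  have orbit: "conj_orbit C2 le2 (\<Phi> X) = \<Phi> ` conj_orbit C1 le1 X" for X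
  proof
    have "\<Psi> ` conj_orbit C2 le2 (\<Phi> X) \<subseteq> conj_orbit C1 le1 X"
      using \<Psi>.maps_orbit[of "\<Phi> X"] by (simp only: \<Psi>\<Phi>)
    then have "\<Phi> ` \<Psi> ` conj_orbit C2 le2 (\<Phi> X) \<subseteq> \<Phi> ` conj_orbit C1 le1 X"
      by (rule image_mono)
    then show "conj_orbit C2 le2 (\<Phi> X) \<subseteq> \<Phi> ` conj_orbit C1 le1 X"
      by (simp add: image_image \<Phi>\<Psi>)
  qed (rule \<Phi>.maps_orbit)
  have "(conj_orbit C2 le2 :: _ \<Rightarrow> ('c \<Rightarrow> 'c \<Rightarrow> 'a) set) ` nilp_M C2 le2
      = image \<Phi> ` conj_orbit C1 le1 ` nilp_M C1 le1"
    by (simp add: nilp[symmetric] image_image orbit)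
  moreover have "inj (image \<Phi>)"
    using inj by (simp add: inj_def inj_image_eq_iff)
  ultimately show ?thesis
    unfolding rho_def by (simp add: card_image inj_on_subset)
qed

definition relabel_transpose :: "('c \<Rightarrow> 'c) \<Rightarrow> ('c \<Rightarrow> 'c \<Rightarrow> 'a) \<Rightarrow> ('c \<Rightarrow> 'c \<Rightarrow> 'a)" where
  "relabel_transpose \<sigma> X = (\<lambda>x y. X (\<sigma> y) (\<sigma> x))"

lemma relabel_transpose_involutive:
  assumes "\<And>x. \<sigma> (\<sigma> x) = x"
  shows "relabel_transpose \<sigma> (relabel_transpose \<sigma> X) = X"
  by (simp add: relabel_transpose_def assms)

lemma relabel_transpose_antihom:
  assumes fin: "finite C2"
    and inv: "\<And>x. \<sigma> (\<sigma> x) = x"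
    and mem: "\<And>x. x \<in> C2 \<longleftrightarrow> \<sigma> x \<in> C1"
    and le: "\<And>x y. x \<in> C2 \<Longrightarrow> y \<in> C2 \<Longrightarrow> le2 x y \<longleftrightarrow> le1 (\<sigma> y) (\<sigma> x)"
  shows "incidence_antihom C1 le1 C2 le2
           (relabel_transpose \<sigma> :: ('c \<Rightarrow> 'c \<Rightarrow> 'a::field) \<Rightarrow> _)"
proof
  have inj: "inj_on \<sigma> C2"
    by (metis inj_onI inv)
  have onto: "\<sigma> ` C2 = C1"
    using mem inv by (metis image_eqI image_subset_iff subsetI subset_antisym)
  show "finite C2" by (rule fin)
  show "relabel_transpose \<sigma> X \<in> incidence_mats C2 le2"
    if "X \<in> incidence_mats C1 le1" for X :: "'c \<Rightarrow> 'c \<Rightarrow> 'a"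
    using that mem le unfolding incidence_mats_def relabel_transpose_def by blast
  show "relabel_transpose \<sigma> (mone C1) = (mone C2 :: 'c \<Rightarrow> 'c \<Rightarrow> 'a)"
    unfolding relabel_transpose_def mone_def using mem inv by (intro ext) metis
  show "relabel_transpose \<sigma> (\<lambda>i j. 0) = (\<lambda>i j. 0 :: 'a)"
    by (simp add: relabel_transpose_def)
  show "relabel_transpose \<sigma> (mmul C1 X Y)
      = mmul C2 (relabel_transpose \<sigma> Y) (relabel_transpose \<sigma> X)" for X Y :: "'c \<Rightarrow> 'c \<Rightarrow> 'a"
    unfolding relabel_transpose_def mmul_def onto[symmetric] sum.reindex[OF inj]
    by (simp add: mult.commute)
qed

text \<open>The hypotheses are symmetric under exchanging the two preorders, so
  relabel-and-transpose is its own inverse anti-isomorphism and rho agrees.\<close>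

lemma rho_eq_relabel_dual:
  assumes fin: "finite C2"
    and inv: "\<And>x. \<sigma> (\<sigma> x) = x"
    and mem: "\<And>x. x \<in> C2 \<longleftrightarrow> \<sigma> x \<in> C1"
    and le: "\<And>x y. x \<in> C2 \<Longrightarrow> y \<in> C2 \<Longrightarrow> le2 x y \<longleftrightarrow> le1 (\<sigma> y) (\<sigma> x)"
  shows "rho TYPE('a::{field,finite}) C1 le1 = rho TYPE('a) C2 le2"
proof (rule rho_eq_antiiso)
  have mem': "x \<in> C1 \<longleftrightarrow> \<sigma> x \<in> C2" for x
    using mem[of "\<sigma> x"] by (simp add: inv)
  have "C1 = \<sigma> ` C2"
    using mem' inv by (metis image_eqI image_subset_iff subsetI subset_antisym)
  then have fin': "finite C1"
    using fin by simp
  have le': "le1 x y \<longleftrightarrow> le2 (\<sigma> y) (\<sigma> x)" if "x \<in> C1" "y \<in> C1" for x y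
    using le[of "\<sigma> y" "\<sigma> x"] that mem' by (simp add: inv)
  show "incidence_antihom C1 le1 C2 le2 (relabel_transpose \<sigma> :: _ \<Rightarrow> _ \<Rightarrow> _ \<Rightarrow> 'a)"
    using relabel_transpose_antihom[where ?C1.0 = C1 and ?le1.0 = le1 and ?C2.0 = C2
        and ?le2.0 = le2 and \<sigma> = \<sigma>] fin inv mem le
    by blast
  show "incidence_antihom C2 le2 C1 le1 (relabel_transpose \<sigma> :: _ \<Rightarrow> _ \<Rightarrow> _ \<Rightarrow> 'a)"
    using relabel_transpose_antihom[where ?C1.0 = C2 and ?le1.0 = le2 and ?C2.0 = C1
        and ?le2.0 = le1 and \<sigma> = \<sigma>] fin' inv mem' le'
    by blast
qed (simp_all add: relabel_transpose_involutive inv)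

lemma rho_dual:
  assumes "finite C"
  shows "rho TYPE('a::{field,finite}) C le = rho TYPE('a) C (\<lambda>x y. le y x)"
  by (rule rho_eq_relabel_dual[where \<sigma> = id]) (simp_all add: assms)

text \<open>Send block i to block s-1-i (for i < s), keeping the position inside the
  block; elsewhere the identity, so that the map is an involution of nat \<times> nat.\<close>

definition reverse_blocks :: "nat \<Rightarrow> nat \<times> nat \<Rightarrow> nat \<times> nat" where
  "reverse_blocks s x = (if fst x < s then (s - 1 - fst x, snd x) else x)"

lemma reverse_blocks_involutive: "reverse_blocks s (reverse_blocks s x) = x"
  unfolding reverse_blocks_def by (cases x) auto

lemma reverse_blocks_mem:
  "x \<in> block_set (rev ls) \<longleftrightarrow> reverse_blocks (length ls) x \<in> block_set ls"
  unfolding reverse_blocks_def block_set_def by (cases x) (auto simp: rev_nth)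

lemma reverse_blocks_le:
  assumes "x \<in> block_set (rev ls)" and "y \<in> block_set (rev ls)"
  shows "block_le x y
    \<longleftrightarrow> block_le (reverse_blocks (length ls) y) (reverse_blocks (length ls) x)"
  using assms unfolding reverse_blocks_def block_le_def block_set_def by auto

lemma finite_block_set: "finite (block_set ls)"
proof -
  have "block_set ls = (SIGMA i:{..<length ls}. {..<ls ! i})"
    unfolding block_set_def by auto
  then show ?thesis by simp
qed

lemma rho_tuple_rev: "rho_tuple TYPE('a::{field,finite}) ls = rho_tuple TYPE('a) (rev ls)"
  unfolding rho_tuple_def
  by (rule rho_eq_relabel_dual[where \<sigma> = "reverse_blocks (length ls)"])
    (simp_all add: finite_block_set reverse_blocks_involutive reverse_blocks_mem reverse_blocks_le)

theorem mainTheorem16: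
  fixes C :: "'c set" and le :: "'c \<Rightarrow> 'c \<Rightarrow> bool"
  assumes "finite C"
    and "\<forall>x\<in>C. le x x"
    and "\<forall>x\<in>C. \<forall>y\<in>C. \<forall>z\<in>C. le x y \<longrightarrow> le y z \<longrightarrow> le x z"
  shows "rho TYPE('a::{field,finite}) C le = rho TYPE('a) C (\<lambda>x y. le y x)
    \<and> (\<forall>ls :: nat list. rho_tuple TYPE('a) ls = rho_tuple TYPE('a) (rev ls))"
  using rho_dual[OF assms(1)] rho_tuple_rev by blast

end
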